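(* In the Classified Reallocation algorithm (with power-of-two laxities), in any round, the number of clients reallocated out of the big channel during the processing of that round's arrival is at most half of the number of clients active in the system at that round.
   Context: Model: discrete time; each client $c_i$ has arrival time, departure time and laxity $w_i$ (a power of $2$), and must transmit at least once in every $w_i$ consecutive time steps while active; one transmission per channel per time step. A round is the period between consecutive events, each round containing exactly one arrival or departure. A reallocation is a change of the channel of a client. For $x>0$, $\lceil\lceil x\rceil\rceil$ denotes the smallest power of $2$ not smaller than $x$. Classified Reallocation algorithm. Channels: one \emph{big channel} (all its clients transmit with period $\tau/2$) and \emph{$w$-channels} for powers of two $w$ (clients transmit with period $w$; at most $w$ clients; \emph{full} when holding $w$). State: $n$ (active clients, initially $0$), threshold $\tau$ (initially $2$). Arrival of $c_i$: $n\leftarrow n+1$. If $2\lceil\lceil n\rceil\rceil>\tau$: $\tau\leftarrow 2\lceil\lceil n\rceil\rceil$; each big-channel client $c_j$ with $w_j<\tau/2$ is reallocated to the non-full $w_j$-channel of minimum load (a new one reserved if needed); remaining big-channel clients get period $\tau/2$. Then if $w_i\ge\tau$, $c_i$ goes to the big channel; otherwise to the non-full $w_i$-channel of minimum load (new one reserved if needed). Departure of $c_i$ from channel $c$: $n\leftarrow n-1$. If $c$ is not the big channel: release $c$ if empty; otherwise if some $w_i$-channel $c'\ne c$ is not full, move one client from $c'$ to $c$. Then if $2\lceil\lceil n\rceil\rceil<\tau$: $\tau\leftarrow 2\lceil\lceil n\rceil\rceil$, big-channel clients get period $\tau/2$, and every $w$-channel with $w>2\tau$ has all its clients reallocated to the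 big channel and is released. *)

theory Defs
  imports Main
begin

text \<open>A channel exists (is reserved) exactly when it holds
at least one client; an emptied channel is thereby released.\<close>

definition pow2 :: "nat \<Rightarrow> bool" where
  "pow2 p \<longleftrightarrow> (\<exists>k. p = 2 ^ k)"

definition ceilpow :: "nat \<Rightarrow> nat" where
  "ceilpow x = (LEAST p. pow2 p \<and> x \<le> p)"

datatype chan = Big | WCh nat nat  (* WCh w k : the k-th w-channel *)

record state =
  nn   :: nat                       (* number of active clients *)
  tau  :: nat
  asg  :: "nat \<Rightarrow> chan option"      (* channel of each client; None = inactive *)
  lax  :: "nat \<Rightarrow> nat"

definition init :: state where
  "init = \<lparr>nn = 0, tau = 2, asg = (\<lambda>_. None), lax = (\<lambda>_. 0)\<rparr>"

definition load :: "(nat \<Rightarrow> chan option) \<Rightarrow> chan \<Rightarrow> nat" where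
  "load f c = card {j. f j = Some c}"

definition nonfull :: "(nat \<Rightarrow> chan option) \<Rightarrow> nat \<Rightarrow> nat \<Rightarrow> bool" where
  "nonfull f w k \<longleftrightarrow> 0 < load f (WCh w k) \<and> load f (WCh w k) < w"

inductive insert_w :: "(nat \<Rightarrow> chan option) \<Rightarrow> nat \<Rightarrow> nat \<Rightarrow> (nat \<Rightarrow> chan option) \<Rightarrow> bool" where
  to_min: "nonfull f w k \<Longrightarrow> (\<forall>k'. nonfull f w k' \<longrightarrow> load f (WCh w k) \<le> load f (WCh w k'))
     \<Longrightarrow> insert_w f j w (f(j := Some (WCh w k)))"
| to_new: "(\<forall>k'. \<not> nonfull f w k') \<Longrightarrow> load f (WCh w k) = 0
     \<Longrightarrow> insert_w f j w (f(j := Some (WCh w k)))"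

inductive insert_all :: "(nat \<Rightarrow> nat) \<Rightarrow> (nat \<Rightarrow> chan option) \<Rightarrow> nat list \<Rightarrow> (nat \<Rightarrow> chan option) \<Rightarrow> bool" where
  nil: "insert_all L f [] f"
| cons: "insert_w f j (L j) f1 \<Longrightarrow> insert_all L f1 js f2 \<Longrightarrow> insert_all L f (j # js) f2"

inductive place :: "(nat \<Rightarrow> chan option) \<Rightarrow> nat \<Rightarrow> nat \<Rightarrow> nat \<Rightarrow> (nat \<Rightarrow> chan option) \<Rightarrow> bool" where
  big: "t \<le> w \<Longrightarrow> place f i w t (f(i := Some Big))"
| small: "w < t \<Longrightarrow> insert_w f i w f' \<Longrightarrow> place f i w t f'"

text \<open>Arrival of client i with laxity w. The natural number m is the number of
clients reallocated out of the big channel while processing this arrival.\<close>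
inductive arrive :: "state \<Rightarrow> nat \<Rightarrow> nat \<Rightarrow> nat \<Rightarrow> state \<Rightarrow> bool" where
  "asg s i = None \<Longrightarrow> pow2 w \<Longrightarrow>
   t' = (if 2 * ceilpow (nn s + 1) > tau s then 2 * ceilpow (nn s + 1) else tau s) \<Longrightarrow>
   M = (if 2 * ceilpow (nn s + 1) > tau s
        then {j. asg s j = Some Big \<and> lax s j < t' div 2} else {}) \<Longrightarrow>
   distinct js \<Longrightarrow> set js = M \<Longrightarrow>
   insert_all (lax s) (asg s) js f2 \<Longrightarrow>
   place f2 i w t' f3 \<Longrightarrow>
   arrive s i w (card M) \<lparr>nn = nn s + 1, tau = t', asg = f3, lax = (lax s)(i := w)\<rparr>"

inductive fill :: "(nat \<Rightarrow> chan option) \<Rightarrow> chan \<Rightarrow> nat \<Rightarrow> (nat \<Rightarrow> chan option) \<Rightarrow> bool" where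
  big: "fill f Big w f"
| empty: "load f c = 0 \<Longrightarrow> fill f c w f"
| none: "c \<noteq> Big \<Longrightarrow> 0 < load f c \<Longrightarrow> (\<forall>k'. WCh w k' \<noteq> c \<longrightarrow> \<not> nonfull f w k') \<Longrightarrow> fill f c w f"
| move: "c \<noteq> Big \<Longrightarrow> 0 < load f c \<Longrightarrow> WCh w k' \<noteq> c \<Longrightarrow> nonfull f w k' \<Longrightarrow>
         f j = Some (WCh w k') \<Longrightarrow> fill f c w (f(j := Some c))"

definition demote :: "nat \<Rightarrow> (nat \<Rightarrow> chan option) \<Rightarrow> (nat \<Rightarrow> chan option)" where
  "demote t f = (\<lambda>j. case f j of Some (WCh w k) \<Rightarrow> (if 2 * t < w then Some Big else f j) | _ \<Rightarrow> f j)"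

inductive depart :: "state \<Rightarrow> nat \<Rightarrow> state \<Rightarrow> bool" where
  "asg s i = Some c \<Longrightarrow>
   fill ((asg s)(i := None)) c (lax s i) f1 \<Longrightarrow>
   t' = (if 2 * ceilpow (nn s - 1) < tau s then 2 * ceilpow (nn s - 1) else tau s) \<Longrightarrow>
   f2 = (if 2 * ceilpow (nn s - 1) < tau s then demote t' f1 else f1) \<Longrightarrow>
   depart s i \<lparr>nn = nn s - 1, tau = t', asg = f2, lax = lax s\<rparr>"

inductive reach :: "state \<Rightarrow> bool" where
  init: "reach init"
| arr: "reach s \<Longrightarrow> arrive s i w m s' \<Longrightarrow> reach s'"
| dep: "reach s \<Longrightarrow> depart s i s' \<Longrightarrow> reach s'"

end

theory Submission
  imports Defs
begin

text \<open>The key invariant is that for every x at most x/2 clients of the big channel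
have laxity at most x. A client enters the big channel either on arrival, with laxity
at least the threshold \<open>\<tau> = 2\<lceil>\<lceil>n\<rceil>\<rceil>\<close>, or by demotion, with laxity above \<open>2\<tau>\<close>; in both
cases the new laxities are at least \<open>\<tau>\<close>, which is at least twice the number of clients,
so the invariant survives every round. When an arrival raises the threshold, n is a
power of two, and the clients evicted from the big channel have power-of-two laxities
below \<open>\<lceil>\<lceil>n + 1\<rceil>\<rceil> = 2n\<close>, i.e. at most n; by the invariant there are at most n/2 of them.\<close>

lemma pow2_ceilpow: "pow2 (ceilpow n)"
  and le_ceilpow: "n \<le> ceilpow n"
proof -
  have "pow2 (2 ^ n) \<and> n \<le> 2 ^ n" by (auto simp: pow2_def less_imp_le)
  then have "pow2 (ceilpow n) \<and> n \<le> ceilpow n" unfolding ceilpow_def by (rule LeastI)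
  then show "pow2 (ceilpow n)" "n \<le> ceilpow n" by simp_all
qed

lemma ceilpow_least: "pow2 p \<Longrightarrow> n \<le> p \<Longrightarrow> ceilpow n \<le> p"
  unfolding ceilpow_def by (rule Least_le) simp

lemma ceilpow_mono: "n \<le> m \<Longrightarrow> ceilpow n \<le> ceilpow m"
  using ceilpow_least[OF pow2_ceilpow, of n m] le_ceilpow[of m] by simp

lemma ceilpow_0: "ceilpow 0 = 1"
  unfolding ceilpow_def by (rule Least_equality) (auto simp: pow2_def intro: exI[of _ 0])

lemma pow2_le_if_less_double:
  assumes "pow2 a" "pow2 b" "a < 2 * b"
  shows "a \<le> b"
proof -
  obtain x y where xy: "a = 2 ^ x" "b = 2 ^ y" using assms(1,2) by (auto simp: pow2_def)
  with assms(3) have "(2::nat) ^ x < 2 ^ Suc y" by simp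
  then have "x < Suc y" using power_strict_increasing_iff[of "2::nat" x "Suc y"] by simp
  then have "x \<le> y" by simp
  then show ?thesis using xy by (simp add: power_increasing)
qed

lemma ceilpow_Suc_le_double: "ceilpow (Suc n) \<le> 2 * ceilpow n"
proof (rule ceilpow_least)
  obtain k where "ceilpow n = 2 ^ k" using pow2_ceilpow[of n] by (auto simp: pow2_def)
  then show "pow2 (2 * ceilpow n)" by (auto simp: pow2_def intro: exI[of _ "Suc k"])
  have "1 \<le> ceilpow n" using pow2_ceilpow[of n] by (auto simp: pow2_def)
  then show "Suc n \<le> 2 * ceilpow n" using le_ceilpow[of n] by linarith
qed

lemma ceilpow_le_self_if_less_ceilpow_Suc:
  assumes "ceilpow n < ceilpow (Suc n)"
  shows "ceilpow n \<le> n"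
proof (rule ccontr)
  assume "\<not> ceilpow n \<le> n"
  then have "ceilpow (Suc n) \<le> ceilpow n" by (intro ceilpow_least pow2_ceilpow) simp
  with assms show False by simp
qed

definition classified :: "(nat \<Rightarrow> chan option) \<Rightarrow> (nat \<Rightarrow> nat) \<Rightarrow> bool" where
  "classified f L \<longleftrightarrow> (\<forall>j w k. f j = Some (WCh w k) \<longrightarrow> L j = w)"

lemma classified_upd:
  "classified f L \<Longrightarrow> (\<And>v k. c = WCh v k \<Longrightarrow> v = w) \<Longrightarrow> classified (f(j := Some c)) (L(j := w))"
  by (auto simp: classified_def)

lemma insert_w_update: "insert_w f j w f' \<Longrightarrow> \<exists>k. f' = f(j := Some (WCh w k))"
  by (cases rule: insert_w.cases) auto

lemma dom_insert_all: "insert_all L f js f' \<Longrightarrow> dom f' = dom f \<union> set js"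
  by (induction rule: insert_all.induct) (auto dest!: insert_w_update)

lemma classified_insert_all: "insert_all L f js f' \<Longrightarrow> classified f L \<Longrightarrow> classified f' L"
proof (induction rule: insert_all.induct)
  case (cons f j L f1 js f2)
  then obtain k where "f1 = f(j := Some (WCh (L j) k))" using insert_w_update by blast
  then have "classified f1 L" using classified_upd[OF cons.prems, of "WCh (L j) k" "L j" j] by simp
  then show ?case by (rule cons.IH)
qed

lemma insert_all_Big:
  "insert_all L f js f' \<Longrightarrow> f' j = Some Big \<Longrightarrow> f j = Some Big \<and> j \<notin> set js"
  by (induction rule: insert_all.induct) (auto dest!: insert_w_update split: if_splits)

lemma place_update:
  "place f i w t f' \<Longrightarrow> t \<le> w \<and> f' = f(i := Some Big) \<or> (\<exists>k. f' = f(i := Some (WCh w k)))"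
  by (cases rule: place.cases) (auto dest: insert_w_update)

lemma dom_place: "place f i w t f' \<Longrightarrow> dom f' = insert i (dom f)"
  by (auto dest!: place_update)

lemma classified_place: "place f i w t f' \<Longrightarrow> classified f L \<Longrightarrow> classified f' (L(i := w))"
  by (auto dest!: place_update intro!: classified_upd)

lemma place_Big:
  "place f i w t f' \<Longrightarrow> f' j = Some Big \<Longrightarrow> j = i \<and> t \<le> w \<or> j \<noteq> i \<and> f j = Some Big"
  by (auto dest!: place_update split: if_splits)

lemma fill_update:
  "fill f c w f' \<Longrightarrow> f' = f \<or> (\<exists>j k. c \<noteq> Big \<and> f j = Some (WCh w k) \<and> f' = f(j := Some c))"
  by (cases rule: fill.cases) auto

lemma dom_fill: "fill f c w f' \<Longrightarrow> dom f' = dom f"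
  by (auto dest!: fill_update split: if_splits)

lemma fill_Big: "fill f c w f' \<Longrightarrow> f' j = Some Big \<Longrightarrow> f j = Some Big"
  by (auto dest!: fill_update split: if_splits)

lemma classified_fill:
  assumes "classified f L" "fill f c w f'" "\<And>v k. c = WCh v k \<Longrightarrow> v = w"
  shows "classified f' L"
  using fill_update[OF assms(2)]
proof
  assume "\<exists>j k. c \<noteq> Big \<and> f j = Some (WCh w k) \<and> f' = f(j := Some c)"
  then obtain j k v k' where "f j = Some (WCh w k)" "f' = f(j := Some c)" "c = WCh v k'"
    by (metis chan.exhaust)
  with assms(1,3) show ?thesis by (auto simp: classified_def)
qed (use assms(1) in simp)

lemma dom_demote: "dom (demote t f) = dom f"
  by (auto simp: demote_def split: option.splits chan.splits)

lemma classified_demote: "classified f L \<Longrightarrow> classified (demote t f) L"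
  by (auto simp: classified_def demote_def split: option.splits chan.splits if_splits)

lemma demote_Big:
  "classified f L \<Longrightarrow> demote t f j = Some Big \<Longrightarrow> f j = Some Big \<or> 2 * t < L j"
  by (auto simp: classified_def demote_def split: option.splits chan.splits if_splits)

definition sparse_big :: "(nat \<Rightarrow> chan option) \<Rightarrow> (nat \<Rightarrow> nat) \<Rightarrow> bool" where
  "sparse_big f L \<longleftrightarrow> (\<forall>x. 2 * card {j. f j = Some Big \<and> L j \<le> x} \<le> x)"

lemma sparse_big_extend:
  assumes sparse: "sparse_big f L" and fin: "finite (dom f)"
    and fin': "finite (dom f')" and few: "2 * card {j. f' j = Some Big} \<le> y"
    and new: "\<And>j. f' j = Some Big \<Longrightarrow> f j = Some Big \<and> L' j = L j \<or> y \<le> L' j"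
  shows "sparse_big f' L'"
  unfolding sparse_big_def
proof
  fix x
  let ?S' = "{j. f' j = Some Big \<and> L' j \<le> x}"
  show "2 * card ?S' \<le> x"
  proof (cases "?S' \<subseteq> {j. f j = Some Big \<and> L j \<le> x}")
    case True
    then have "card ?S' \<le> card {j. f j = Some Big \<and> L j \<le> x}"
      by (rule card_mono[rotated]) (auto intro: finite_subset[OF _ fin])
    with sparse show ?thesis unfolding sparse_big_def by (meson le_trans mult_le_mono2)
  next
    case False
    then have "y \<le> x" using new by fastforce
    moreover have "card ?S' \<le> card {j. f' j = Some Big}" by (rule card_mono) (auto intro: finite_subset[OF _ fin'])
    ultimately show ?thesis using few by linarith
  qed
qed

definition invar :: "state \<Rightarrow> bool" where
  "invar s \<longleftrightarrow> tau s = 2 * ceilpow (nn s) \<and> finite (dom (asg s)) \<and> card (dom (asg s)) = nn s \<and>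
     (\<forall>j \<in> dom (asg s). pow2 (lax s j)) \<and> classified (asg s) (lax s) \<and> sparse_big (asg s) (lax s)"

lemma invar_init: "invar init"
  by (simp add: invar_def init_def ceilpow_0 classified_def sparse_big_def)

lemma card_Big_le:
  "finite (dom f) \<Longrightarrow> card {j. f j = Some Big} \<le> card (dom f)"
  by (rule card_mono) auto

lemma invar_arrive:
  assumes inv: "invar s" and arr: "arrive s i w m s'"
  shows "invar s'"
proof -
  let ?n = "nn s"
  from arr obtain t' M js f2 f3 where
    new: "asg s i = None" "pow2 w" and
    t': "t' = (if 2 * ceilpow (?n + 1) > tau s then 2 * ceilpow (?n + 1) else tau s)" and
    M: "M = (if 2 * ceilpow (?n + 1) > tau s then {j. asg s j = Some Big \<and> lax s j < t' div 2} else {})" and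
    js: "set js = M" and ins: "insert_all (lax s) (asg s) js f2" and pl: "place f2 i w t' f3" and
    s': "s' = \<lparr>nn = ?n + 1, tau = t', asg = f3, lax = (lax s)(i := w)\<rparr>"
    by (cases rule: arrive.cases) blast
  have tau: "tau s = 2 * ceilpow ?n" and fin: "finite (dom (asg s))" and card: "card (dom (asg s)) = ?n"
    and pow2: "\<forall>j \<in> dom (asg s). pow2 (lax s j)" and cls: "classified (asg s) (lax s)"
    and sparse: "sparse_big (asg s) (lax s)"
    using inv by (simp_all add: invar_def)
  have t'_eq: "t' = 2 * ceilpow (Suc ?n)"
    using t' tau ceilpow_mono[of ?n "Suc ?n"] by auto
  have "set js \<subseteq> dom (asg s)" using js M by (auto split: if_splits)
  then have dom': "dom f3 = insert i (dom (asg s))"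
    using dom_place[OF pl] dom_insert_all[OF ins] by auto
  have fin': "finite (dom f3)" and card': "card (dom f3) = Suc ?n"
    using dom' fin card new(1) by (auto simp: domIff)
  have "2 * card {j. f3 j = Some Big} \<le> t'"
    using card_Big_le[OF fin'] card' le_ceilpow[of "Suc ?n"] t'_eq by linarith
  moreover have "f3 j = Some Big \<Longrightarrow>
      asg s j = Some Big \<and> ((lax s)(i := w)) j = lax s j \<or> t' \<le> ((lax s)(i := w)) j" for j
    using place_Big[OF pl] insert_all_Big[OF ins] by fastforce
  ultimately have "sparse_big f3 ((lax s)(i := w))" by (rule sparse_big_extend[OF sparse fin fin'])
  moreover have "classified f3 ((lax s)(i := w))"
    using classified_place[OF pl classified_insert_all[OF ins cls]] .
  moreover have "\<forall>j \<in> dom f3. pow2 (((lax s)(i := w)) j)" using dom' pow2 new(2) by auto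
  ultimately show ?thesis using fin' card' t'_eq by (simp add: invar_def s')
qed

lemma invar_depart:
  assumes inv: "invar s" and dep: "depart s i s'"
  shows "invar s'"
proof -
  let ?n = "nn s" and ?f = "(asg s)(i := None)"
  from dep obtain c f1 t' f2 where
    c: "asg s i = Some c" and fl: "fill ?f c (lax s i) f1" and
    t': "t' = (if 2 * ceilpow (?n - 1) < tau s then 2 * ceilpow (?n - 1) else tau s)" and
    f2: "f2 = (if 2 * ceilpow (?n - 1) < tau s then demote t' f1 else f1)" and
    s': "s' = \<lparr>nn = ?n - 1, tau = t', asg = f2, lax = lax s\<rparr>"
    by (cases rule: depart.cases) blast
  have tau: "tau s = 2 * ceilpow ?n" and fin: "finite (dom (asg s))" and card: "card (dom (asg s)) = ?n"
    and pow2: "\<forall>j \<in> dom (asg s). pow2 (lax s j)" and cls: "classified (asg s) (lax s)"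
    and sparse: "sparse_big (asg s) (lax s)"
    using inv by (simp_all add: invar_def)
  have t'_eq: "t' = 2 * ceilpow (?n - 1)"
    using t' tau ceilpow_mono[of "?n - 1" ?n] by auto
  have dom': "dom f2 = dom (asg s) - {i}"
    using dom_fill[OF fl] f2 by (simp add: dom_demote)
  have fin': "finite (dom f2)" and card': "card (dom f2) = ?n - 1"
    using dom' fin card c by (auto simp: card_Diff_singleton domI)
  have "classified ?f (lax s)" using cls by (simp add: classified_def)
  moreover have "c = WCh v k \<Longrightarrow> v = lax s i" for v k using cls c by (simp add: classified_def)
  ultimately have cls1: "classified f1 (lax s)" by (rule classified_fill[OF _ fl])
  have "2 * card {j. f2 j = Some Big} \<le> t'"
    using card_Big_le[OF fin'] card' le_ceilpow[of "?n - 1"] t'_eq by linarith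
  moreover have "f2 j = Some Big \<Longrightarrow> asg s j = Some Big \<or> t' \<le> lax s j" for j
    using demote_Big[OF cls1] fill_Big[OF fl] f2 by (fastforce split: if_splits)
  ultimately have "sparse_big f2 (lax s)" by (intro sparse_big_extend[OF sparse fin fin']) auto
  moreover have "classified f2 (lax s)" using cls1 f2 by (simp add: classified_demote)
  ultimately show ?thesis using fin' card' t'_eq dom' pow2 by (simp add: invar_def s')
qed

lemma reach_invar: "reach s \<Longrightarrow> invar s"
  by (induction rule: reach.induct) (auto intro: invar_init invar_arrive invar_depart)

lemma card_evicted_le:
  assumes inv: "invar s" and raise: "tau s < 2 * ceilpow (Suc (nn s))"
  shows "2 * card {j. asg s j = Some Big \<and> lax s j < ceilpow (Suc (nn s))} \<le> nn s"
proof -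
  let ?n = "nn s"
  have tau: "tau s = 2 * ceilpow ?n" and fin: "finite (dom (asg s))"
    and pow2: "\<forall>j \<in> dom (asg s). pow2 (lax s j)" and sparse: "sparse_big (asg s) (lax s)"
    using inv by (simp_all add: invar_def)
  have "{j. asg s j = Some Big \<and> lax s j < ceilpow (Suc ?n)}
      \<subseteq> {j. asg s j = Some Big \<and> lax s j \<le> ceilpow ?n}"
  proof (intro subsetI CollectI conjI)
    fix j assume j: "j \<in> {j. asg s j = Some Big \<and> lax s j < ceilpow (Suc ?n)}"
    then show "asg s j = Some Big" by simp
    have "lax s j < 2 * ceilpow ?n" using j ceilpow_Suc_le_double[of ?n] by simp
    moreover have "pow2 (lax s j)" using j pow2 by (auto simp: domI)
    ultimately show "lax s j \<le> ceilpow ?n" using pow2_le_if_less_double pow2_ceilpow by blast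
  qed
  then have "card {j. asg s j = Some Big \<and> lax s j < ceilpow (Suc ?n)}
      \<le> card {j. asg s j = Some Big \<and> lax s j \<le> ceilpow ?n}"
    by (rule card_mono[rotated]) (auto intro: finite_subset[OF _ fin])
  moreover have "2 * card {j. asg s j = Some Big \<and> lax s j \<le> ceilpow ?n} \<le> ceilpow ?n"
    using sparse by (simp add: sparse_big_def)
  moreover have "ceilpow ?n \<le> ?n"
    using raise tau by (intro ceilpow_le_self_if_less_ceilpow_Suc) simp
  ultimately show ?thesis by linarith
qed

theorem lemma2:
  assumes "reach s"
    and "arrive s i w m s'"
  shows "2 * m \<le> nn s'"
proof -
  from assms(2) obtain t' where
    t': "t' = (if 2 * ceilpow (nn s + 1) > tau s then 2 * ceilpow (nn s + 1) else tau s)" and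
    m: "m = card (if 2 * ceilpow (nn s + 1) > tau s
                  then {j. asg s j = Some Big \<and> lax s j < t' div 2} else {})" and
    n': "nn s' = nn s + 1"
    by (cases rule: arrive.cases) auto
  show ?thesis
  proof (cases "2 * ceilpow (nn s + 1) > tau s")
    case True
    then have "2 * m \<le> nn s" using card_evicted_le[OF reach_invar[OF assms(1)]] t' m by simp
    then show ?thesis using n' by simp
  qed (use m in simp)
qed

end
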